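(* Let $V$ be a finite-dimensional real vector space and let $X:\lambda\to\mathrm{End}(V)$ be a map such that for all $\alpha,\beta\in\lambda$: $X(\alpha)X(\beta)-X(\beta)X(\alpha)=0$ if $(\alpha|\beta)=0$, and $X(\alpha)X(\beta)+X(\beta)X(\alpha)=X(\alpha\pm\beta)$ if $(\alpha|\beta)=\mp1$ and $\alpha\pm\beta\in\lambda$. Then the assignment $X_i\mapsto X(\alpha_i)\otimes\Gamma(\alpha_i)\in\mathrm{End}(V\otimes S)$ extends to a finite-dimensional representation $\sigma$ of $\mathfrak k$ on $V\otimes S$.
   Context: Let $A=(a_{ij})_{1\le i,j\le n}$ be a symmetrizable simply laced generalized Cartan matrix (off-diagonal entries $0$ or $-1$); the Dynkin diagram has an edge between $i\ne j$ iff $a_{ij}=-1$. Let $\mathfrak g$ be the split real Kac–Moody algebra of $A$ with Chevalley generators $e_i,f_i$, Cartan subalgebra $\mathfrak h$ (from a real realization), simple roots $\alpha_1,\dots,\alpha_n\in\mathfrak h^*$, and let $(\cdot|\cdot)$ be the nondegenerate invariant symmetric bilinear form induced on $\mathfrak h^*$, with $(\alpha_i|\alpha_j)=a_{ij}$. Let $\mathfrak k$ be the fixed-point subalgebra of the Chevalley involution ($e_i\mapsto -f_i$, $f_i\mapsto-e_i$, $h\mapsto -h$), with Berman generators $X_i=e_i-f_i$; $\mathfrak k$ is presented by generators $X_1,\dots,X_n$ and relations $[X_i,[X_i,X_j]]=-X_j$ if $a_{ij}=-1$, $[X_i,X_j]=0$ if $a_{ij}=0$. Let $\lambda$ be the set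 of real roots consisting of the simple roots $\alpha_1,\dots,\alpha_n$ together with all $\alpha_i+\alpha_j$ for $i,j$ forming an edge of the Dynkin diagram. A generalized spin representation is a representation $\rho$ of $\mathfrak k$ with $\rho(X_i)^2=-\frac14\mathrm{id}$ for all $i$. Fix a finite-dimensional real vector space $S$ with positive definite inner product and orthonormal basis $f_1,\dots,f_l$, and a generalized spin representation $\rho:\mathfrak k\to\mathrm{End}(S)$ whose values $\rho(X_i)$ are anti-symmetric real matrices with respect to this basis (such exist, e.g. by realifying the generalized spin representations with compact image constructed by Hainke–Köhl–Levy); put $\Gamma(\alpha_i):=2\rho(X_i)$. *)

theory Defs
  imports "HOL-Analysis.Analysis" "HOL-Library.Function_Algebras"
begin

text \<open>Indices of the simple roots are the elements of a finite type 'n.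
  Roots are represented by their coefficient vectors w.r.t. the simple roots
  (the simple roots are linearly independent in h*), i.e. as 'n => int.\<close>

definition simply_laced_gcm :: "('n::finite \<Rightarrow> 'n \<Rightarrow> int) \<Rightarrow> bool" where
  "simply_laced_gcm A \<longleftrightarrow>
     (\<forall>i. A i i = 2) \<and> (\<forall>i j. i \<noteq> j \<longrightarrow> A i j = 0 \<or> A i j = -1) \<and>
     (\<forall>i j. A i j = A j i)"

definition simple_root :: "'n \<Rightarrow> ('n \<Rightarrow> int)" where
  "simple_root i = (\<lambda>k. if k = i then 1 else 0)"

definition root_form :: "('n::finite \<Rightarrow> 'n \<Rightarrow> int) \<Rightarrow> ('n \<Rightarrow> int) \<Rightarrow> ('n \<Rightarrow> int) \<Rightarrow> int" where
  "root_form A \<alpha> \<beta> = (\<Sum>i\<in>UNIV. \<Sum>j\<in>UNIV. \<alpha> i * A i j * \<beta> j)"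

definition lam :: "('n::finite \<Rightarrow> 'n \<Rightarrow> int) \<Rightarrow> ('n \<Rightarrow> int) set" where
  "lam A = range simple_root \<union>
     {simple_root i + simple_root j | i j. i \<noteq> j \<and> A i j = -1}"

definition commutator :: "real^'a^'a \<Rightarrow> real^'a^'a \<Rightarrow> real^'a^'a" where
  "commutator P Q = P ** Q - Q ** P"

text \<open>Images Y_i of the Berman generators X_i define a representation of k
  (k is presented by the generators X_i and the relations below) iff:\<close>
definition k_relations :: "('n::finite \<Rightarrow> 'n \<Rightarrow> int) \<Rightarrow> ('n \<Rightarrow> real^'a^'a) \<Rightarrow> bool" where
  "k_relations A Y \<longleftrightarrow>
     (\<forall>i j. i \<noteq> j \<longrightarrow>
        (A i j = -1 \<longrightarrow> commutator (Y i) (commutator (Y i) (Y j)) = - Y j) \<and>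
        (A i j = 0 \<longrightarrow> commutator (Y i) (Y j) = 0))"

text \<open>Tensor product of endomorphisms (Kronecker product) on V (x) S.\<close>
definition kron :: "real^'m^'m \<Rightarrow> real^'l^'l \<Rightarrow> real^('m \<times> 'l)^('m \<times> 'l)" where
  "kron P Q = (\<chi> r. \<chi> c. P $ fst r $ fst c * Q $ snd r $ snd c)"

end

theory Submission
  imports Defs
begin

text \<open>Put \<open>\<Gamma>\<^sub>i = 2\<rho>(X\<^sub>i)\<close> and \<open>Y\<^sub>i = X(\<alpha>\<^sub>i) \<otimes> \<Gamma>\<^sub>i\<close>; then \<open>\<Gamma>\<^sub>i\<^sup>2 = -1\<close>. The relations of \<open>\<rho>\<close> make \<open>\<Gamma>\<^sub>i, \<Gamma>\<^sub>j\<close> commute for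
  non-adjacent \<open>i, j\<close> and anticommute for adjacent ones. The commutator of \<open>P \<otimes> Q\<close> and
  \<open>P' \<otimes> Q'\<close> is \<open>[P,P'] \<otimes> QQ'\<close> if \<open>Q, Q'\<close> commute and \<open>(PP' + P'P) \<otimes> QQ'\<close> if they
  anticommute. Thus for an edge \<open>[Y\<^sub>i, Y\<^sub>j] = X(\<alpha>\<^sub>i + \<alpha>\<^sub>j) \<otimes> \<Gamma>\<^sub>i\<Gamma>\<^sub>j\<close>, and since \<open>\<Gamma>\<^sub>i\<close> also
  anticommutes with \<open>\<Gamma>\<^sub>i\<Gamma>\<^sub>j\<close>, the relation for \<open>X(\<alpha>\<^sub>i + \<alpha>\<^sub>j - \<alpha>\<^sub>i)\<close> gives
  \<open>[Y\<^sub>i, [Y\<^sub>i, Y\<^sub>j]] = X(\<alpha>\<^sub>j) \<otimes> \<Gamma>\<^sub>i\<^sup>2\<Gamma>\<^sub>j = -Y\<^sub>j\<close>.\<close>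

lemma matrix_diff_ldistrib: "C ** (A - B) = C ** A - C ** (B :: 'a::ring_1^'n^'m)"
  by (vector matrix_matrix_mult_def sum_subtractf[symmetric] field_simps)

lemma matrix_diff_rdistrib: "(A - B) ** C = A ** C - B ** (C :: 'a::ring_1^'n^'m)"
  by (vector matrix_matrix_mult_def sum_subtractf[symmetric] field_simps)

lemma matrix_mul_uminus_left: "(- A) ** B = - (A ** (B :: 'a::ring_1^'n^'m))"
  by (vector matrix_matrix_mult_def sum_negf[symmetric])

lemma matrix_mul_uminus_right: "A ** (- B) = - (A ** (B :: 'a::ring_1^'n^'m))"
  by (vector matrix_matrix_mult_def sum_negf[symmetric])

lemma kron_mult: "kron P Q ** kron P' Q' = kron (P ** P') (Q ** Q')"
proof -
  have "(\<Sum>k\<in>UNIV. P $ fst r $ fst k * Q $ snd r $ snd k * (P' $ fst k $ fst c * Q' $ snd k $ snd c))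
      = (\<Sum>a\<in>UNIV. P $ fst r $ a * P' $ a $ fst c) * (\<Sum>b\<in>UNIV. Q $ snd r $ b * Q' $ b $ snd c)"
    for r c
    unfolding sum_product sum.cartesian_product UNIV_Times_UNIV
    by (simp add: prod.case_eq_if mult_ac)
  then show ?thesis
    by (simp add: kron_def matrix_matrix_mult_def vec_eq_iff)
qed

lemma kron_add_left: "kron (P + P') Q = kron P Q + kron P' Q"
  by (simp add: kron_def vec_eq_iff distrib_right)

lemma kron_uminus_right: "kron P (- Q) = - kron P Q"
  by (simp add: kron_def vec_eq_iff)

lemma root_form_simple_root: "root_form A (simple_root i) (simple_root j) = A i j"
proof -
  have "(if p then 1 else 0) * y = (if p then y else 0)" "y * (if p then 1 else 0) = (if p then y else 0)"
    for p and y :: int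
    by simp_all
  then show ?thesis
    by (simp add: root_form_def simple_root_def)
qed

lemma root_form_add_left: "root_form A (\<alpha> + \<beta>) \<gamma> = root_form A \<alpha> \<gamma> + root_form A \<beta> \<gamma>"
  by (simp add: root_form_def distrib_right sum.distrib)

lemma root_form_edge_sum_simple_root:
  assumes "simply_laced_gcm A" and "A i j = -1"
  shows "root_form A (simple_root i + simple_root j) (simple_root i) = 1"
  using assms by (simp add: simply_laced_gcm_def root_form_add_left root_form_simple_root)

lemma simple_root_in_lam: "simple_root i \<in> lam A"
  by (simp add: lam_def)

lemma simple_root_add_in_lam: "i \<noteq> j \<Longrightarrow> A i j = -1 \<Longrightarrow> simple_root i + simple_root j \<in> lam A"
  by (auto simp: lam_def)

lemma commutator_kron_commuting:
  assumes "P ** P' = P' ** P" and "Q ** Q' = Q' ** Q"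
  shows "commutator (kron P Q) (kron P' Q') = 0"
  by (simp add: commutator_def kron_mult assms)

lemma commutator_kron_anticommuting:
  assumes "Q' ** Q = - (Q ** Q')"
  shows "commutator (kron P Q) (kron P' Q') = kron (P ** P' + P' ** P) (Q ** Q')"
  by (simp add: commutator_def kron_mult assms kron_uminus_right kron_add_left)

lemma commutator_kron_double_anticommuting:
  assumes Q_sq: "Q ** Q = - mat 1" and anti: "Q' ** Q = - (Q ** Q')"
    and P_anti: "P ** P' + P' ** P = P''" "P ** P'' + P'' ** P = P'"
  shows "commutator (kron P Q) (commutator (kron P Q) (kron P' Q')) = - kron P' Q'"
proof -
  have "(Q ** Q') ** Q = - (Q ** (Q ** Q'))"
    by (simp flip: matrix_mul_assoc add: anti matrix_mul_uminus_right)
  then have "commutator (kron P Q) (kron P'' (Q ** Q')) = kron P' (Q ** (Q ** Q'))"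
    by (simp add: commutator_kron_anticommuting P_anti)
  then show ?thesis
    by (simp add: commutator_kron_anticommuting anti P_anti matrix_mul_assoc Q_sq
        matrix_mul_uminus_left kron_uminus_right)
qed

lemma spin_square:
  fixes R :: "real^'n^'n"
  assumes "R ** R = - ((1/4) *\<^sub>R mat 1)"
  shows "(2 *\<^sub>R R) ** (2 *\<^sub>R R) = - mat 1"
  by (simp add: assms matrix_scalar_ac scalar_matrix_assoc[symmetric])

lemma spin_anticommute:
  fixes R S :: "real^'n^'n"
  assumes R_sq: "R ** R = - ((1/4) *\<^sub>R mat 1)"
    and rel: "commutator R (commutator R S) = - S"
  shows "S ** R = - (R ** S)"
proof -
  have "- S = (R ** R) ** S - R ** S ** R - R ** S ** R + S ** (R ** R)"
    by (simp add: rel[symmetric] commutator_def matrix_diff_ldistrib matrix_diff_rdistrib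
        matrix_mul_assoc)
  also have "\<dots> = - ((1/4) *\<^sub>R S) - R ** S ** R - R ** S ** R - (1/4) *\<^sub>R S"
    by (simp add: R_sq matrix_mul_uminus_left matrix_mul_uminus_right matrix_scalar_ac
        scalar_matrix_assoc[symmetric])
  finally have "2 *\<^sub>R (R ** S ** R) = S - (1/4) *\<^sub>R S - (1/4) *\<^sub>R S"
    by (simp add: scaleR_2 algebra_simps)
  also have "\<dots> = (1/2) *\<^sub>R S"
    by (simp flip: scaleR_diff_left)
  finally have "(1/2) *\<^sub>R (2 *\<^sub>R (R ** S ** R)) = (1/2) *\<^sub>R ((1/2) *\<^sub>R S)"
    by simp
  then have sandwich: "R ** S ** R = (1/4) *\<^sub>R S"
    by simp
  have "(1/4) *\<^sub>R (R ** S) = R ** (R ** S ** R)"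
    by (simp add: sandwich matrix_scalar_ac scalar_matrix_assoc)
  also have "\<dots> = - ((1/4) *\<^sub>R (S ** R))"
    by (simp add: matrix_mul_assoc R_sq matrix_mul_uminus_left scalar_matrix_assoc[symmetric])
  finally show ?thesis
    by (simp add: vector_fraction_eq_iff flip: scaleR_minus_right)
qed


lemma spin_generators_commute:
  assumes "k_relations A Rho" and "i \<noteq> j" and "A i j = 0"
  shows "(2 *\<^sub>R Rho i) ** (2 *\<^sub>R Rho j) = (2 *\<^sub>R Rho j) ** (2 *\<^sub>R Rho i)"
proof -
  have "Rho i ** Rho j = Rho j ** Rho i"
    using assms by (auto simp: k_relations_def commutator_def)
  then show ?thesis
    by (simp add: matrix_scalar_ac scalar_matrix_assoc[symmetric])
qed

lemma spin_generators_anticommute: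
  assumes "k_relations A Rho" and "\<And>i. Rho i ** Rho i = - ((1/4) *\<^sub>R mat 1)"
    and "i \<noteq> j" and "A i j = -1"
  shows "(2 *\<^sub>R Rho j) ** (2 *\<^sub>R Rho i) = - ((2 *\<^sub>R Rho i) ** (2 *\<^sub>R Rho j))"
proof -
  have "Rho j ** Rho i = - (Rho i ** Rho j)"
    using assms by (intro spin_anticommute) (auto simp: k_relations_def)
  then show ?thesis
    by (simp add: matrix_scalar_ac scalar_matrix_assoc[symmetric])
qed


theorem proposition4p1:
  fixes A :: "'n::finite \<Rightarrow> 'n \<Rightarrow> int"
    and Rho :: "'n \<Rightarrow> real^'l::finite^'l"
    and X :: "('n \<Rightarrow> int) \<Rightarrow> real^'m::finite^'m"
  assumes gcm: "simply_laced_gcm A"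
    and rho_rep: "k_relations A Rho"
    and rho_spin: "\<And>i. Rho i ** Rho i = - ((1/4::real) *\<^sub>R mat 1)"
    and rho_antisym: "\<And>i. transpose (Rho i) = - Rho i"
    and X_comm: "\<And>\<alpha> \<beta>. \<alpha> \<in> lam A \<Longrightarrow> \<beta> \<in> lam A \<Longrightarrow> root_form A \<alpha> \<beta> = 0 \<Longrightarrow>
        X \<alpha> ** X \<beta> - X \<beta> ** X \<alpha> = 0"
    and X_plus: "\<And>\<alpha> \<beta>. \<alpha> \<in> lam A \<Longrightarrow> \<beta> \<in> lam A \<Longrightarrow> root_form A \<alpha> \<beta> = -1 \<Longrightarrow>
        \<alpha> + \<beta> \<in> lam A \<Longrightarrow> X \<alpha> ** X \<beta> + X \<beta> ** X \<alpha> = X (\<alpha> + \<beta>)"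
    and X_minus: "\<And>\<alpha> \<beta>. \<alpha> \<in> lam A \<Longrightarrow> \<beta> \<in> lam A \<Longrightarrow> root_form A \<alpha> \<beta> = 1 \<Longrightarrow>
        \<alpha> - \<beta> \<in> lam A \<Longrightarrow> X \<alpha> ** X \<beta> + X \<beta> ** X \<alpha> = X (\<alpha> - \<beta>)"
  shows "k_relations A (\<lambda>i. kron (X (simple_root i)) (2 *\<^sub>R Rho i))"
  unfolding k_relations_def
proof (intro allI impI conjI)
  fix i j :: 'n
  assume "i \<noteq> j"
  let ?\<alpha> = "simple_root i" and ?\<beta> = "simple_root j"
  show "commutator (kron (X ?\<alpha>) (2 *\<^sub>R Rho i)) (kron (X ?\<beta>) (2 *\<^sub>R Rho j)) = 0"
    if "A i j = 0"
  proof (rule commutator_kron_commuting)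
    show "X ?\<alpha> ** X ?\<beta> = X ?\<beta> ** X ?\<alpha>"
      using X_comm[of ?\<alpha> ?\<beta>] by (simp add: simple_root_in_lam root_form_simple_root that)
  qed (rule spin_generators_commute[OF rho_rep \<open>i \<noteq> j\<close> that])
  show "commutator (kron (X ?\<alpha>) (2 *\<^sub>R Rho i))
      (commutator (kron (X ?\<alpha>) (2 *\<^sub>R Rho i)) (kron (X ?\<beta>) (2 *\<^sub>R Rho j)))
      = - kron (X ?\<beta>) (2 *\<^sub>R Rho j)"
    if edge: "A i j = -1"
  proof (rule commutator_kron_double_anticommuting)
    have edge_sum: "?\<alpha> + ?\<beta> \<in> lam A"
      using \<open>i \<noteq> j\<close> edge by (rule simple_root_add_in_lam)
    show "X ?\<alpha> ** X ?\<beta> + X ?\<beta> ** X ?\<alpha> = X (?\<alpha> + ?\<beta>)"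
      and "X ?\<alpha> ** X (?\<alpha> + ?\<beta>) + X (?\<alpha> + ?\<beta>) ** X ?\<alpha> = X ?\<beta>"
      using X_plus[OF simple_root_in_lam simple_root_in_lam _ edge_sum]
        X_minus[OF edge_sum simple_root_in_lam] root_form_edge_sum_simple_root[OF gcm edge]
      by (simp_all add: root_form_simple_root edge simple_root_in_lam add.commute)
  qed (use spin_square[OF rho_spin] spin_generators_anticommute[OF rho_rep rho_spin \<open>i \<noteq> j\<close> edge]
      in auto)
qed

end
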